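(* Let $\alpha\in(1,2)$ and $b>0$. Let $\{X_j\}_{j\in\mathbb N}$ be i.i.d. mean-zero random variables with $X_j\le b$ a.s. and $\mathbb P[X_j<-r]\sim r^{-\alpha}$ as $r\to\infty$. Let $S_0=0$ and $S_n=\sum_{j=1}^nX_j$. Then there are constants $a_0,a_1>0$, not depending on $n$ or $C$, such that for all $C>0$ and $n\in\mathbb N$, $$\mathbb P\Big[\max_{m\in[1,n]\cap\mathbb Z}S_m\ge Cn^{1/\alpha}\Big]\le a_0e^{-a_1C}.$$ *)

theory Defs
  imports "HOL-Probability.Probability" "HOL-Library.Landau_Symbols"
begin

end

theory Submission
  imports Defs
begin

text \<open>
  Fix \<open>0 < \<lambda> \<le> 1/b\<close> and put \<open>\<phi>(s) = e^s - 1 - s \<ge> 0\<close>. Since \<open>E X = 0\<close>, we have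
  \<open>E e^(\<lambda>X) = 1 + E \<phi>(\<lambda>X)\<close>. Where \<open>X \<ge> 0\<close>, \<open>\<phi>(\<lambda>X) \<le> (\<lambda>b)^2 \<le> (\<lambda>b)^\<alpha>\<close>; where \<open>X < 0\<close>,
  \<open>\<phi>(\<lambda>X) \<le> min ((\<lambda>X)^2) |\<lambda>X|\<close>, and splitting the range of \<open>-\<lambda>X\<close> into dyadic blocks and
  using \<open>P[X < -r] \<le> K r^-\<alpha>\<close> on each block gives \<open>E e^(\<lambda>X) \<le> 1 + D \<lambda>^\<alpha>\<close>.
  As \<open>e^(\<lambda>S_m)\<close> is a submartingale, splitting the event \<open>max S_m \<ge> x\<close> according to the first
  time \<open>S_m \<ge> x\<close> gives Doob's bound \<open>P[max S_m \<ge> x] \<le> e^(-\<lambda>x) (1 + D \<lambda>^\<alpha>)^n \<le> e^(-\<lambda>x + n D \<lambda>^\<alpha>)\<close>.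
  The choice \<open>\<lambda> = n^(-1/\<alpha>) / b\<close>, \<open>x = C n^(1/\<alpha>)\<close> makes the exponent \<open>-C/b + D b^-\<alpha>\<close>.
\<close>

lemma dyadic_bracket_gt_one:
  fixes u :: real assumes "1 < u"
  shows "\<exists>k::nat. 2 ^ k < u \<and> u \<le> 2 ^ (k + 1)"
proof -
  define k where "k = nat (\<lceil>log 2 u\<rceil> - 1)"
  have "0 < log 2 u" using assms by simp
  then have "\<lceil>log 2 u\<rceil> = int k + 1" by (simp add: k_def)
  then show ?thesis using assms
    by (intro exI[of _ k]) (simp add: ceiling_log_eq_powr_iff powr_add powr_realpow)
qed

lemma dyadic_bracket_le_one:
  fixes u :: real assumes "0 < u" "u \<le> 1"
  shows "\<exists>k::nat. 1 / 2 ^ (k + 1) < u \<and> u \<le> 1 / 2 ^ k"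
proof -
  define k where "k = nat \<lfloor>log 2 (1 / u)\<rfloor>"
  have "0 \<le> log 2 (1 / u)" using assms by simp
  then have "\<lfloor>log 2 (1 / u)\<rfloor> = int k" by (simp add: k_def)
  then have "2 ^ k \<le> 1 / u \<and> 1 / u < 2 ^ (k + 1)" using assms
    by (simp add: floor_log_eq_powr_iff powr_add powr_realpow)
  then show ?thesis using assms
    by (intro exI[of _ k]) (auto simp: field_simps)
qed

lemma power_powr:
  fixes x :: real assumes "0 \<le> x"
  shows "(x ^ n) powr a = (x powr a) ^ n"
  using assms by (induction n) (simp_all add: powr_mult)

lemma two_powr_ratios_less_one:
  fixes \<alpha> :: real assumes "1 < \<alpha>" "\<alpha> < 2"
  shows "2 powr \<alpha> / 4 < 1" and "2 powr (1 - \<alpha>) < 1"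
  using powr_less_mono[of \<alpha> 2 2] powr_less_mono[of "1 - \<alpha>" 0 2] assms by simp_all

lemma exp_minus_sub_one_add_le:
  fixes u :: real assumes "0 \<le> u"
  shows "exp (- u) - 1 + u \<le> u\<^sup>2" and "exp (- u) - 1 + u \<le> u"
proof -
  have "exp (- u) \<le> 1 / (1 + u)"
    using exp_ge_add_one_self[of u] assms by (simp add: exp_minus field_simps)
  moreover have "1 / (1 + u) - 1 + u = u\<^sup>2 / (1 + u)"
    using assms by (simp add: field_simps power2_eq_square)
  moreover have "u\<^sup>2 / (1 + u) \<le> u\<^sup>2"
    using assms by (simp add: divide_le_eq mult_le_cancel_left1)
  ultimately show "exp (- u) - 1 + u \<le> u\<^sup>2" by linarith
  show "exp (- u) - 1 + u \<le> u" using assms by simp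
qed

lemma le_suminf_ennreal:
  fixes f :: "nat \<Rightarrow> ennreal" shows "f k \<le> (\<Sum>k. f k)"
  by (rule sum_le_suminf[OF summableI, of "{k}", simplified])

lemma exp_minus_sub_one_add_le_dyadic:
  fixes u :: real assumes "0 < u"
  shows "ennreal (exp (- u) - 1 + u)
    \<le> (\<Sum>k. ennreal ((1 / 4) ^ k) * indicator {1 / 2 ^ (k + 1) <..} u)
      + (\<Sum>k. ennreal (2 ^ (k + 1)) * indicator {2 ^ k <..} u)"
proof (cases "u \<le> 1")
  case True
  then obtain k :: nat where k: "1 / 2 ^ (k + 1) < u" "u \<le> 1 / 2 ^ k"
    using dyadic_bracket_le_one assms by blast
  have "exp (- u) - 1 + u \<le> u\<^sup>2" using exp_minus_sub_one_add_le assms by simp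
  also have "u\<^sup>2 \<le> (1 / 2 ^ k)\<^sup>2" using k assms by (intro power_mono) auto
  also have "(1 / 2 ^ k)\<^sup>2 = (1 / 4 :: real) ^ k"
    by (simp add: power_one_over power_even_eq [symmetric] power_mult)
  finally have "ennreal (exp (- u) - 1 + u) \<le> ennreal ((1 / 4) ^ k) * indicator {1 / 2 ^ (k + 1) <..} u"
    using k by (simp add: ennreal_leI)
  also have "\<dots> \<le> (\<Sum>k. ennreal ((1 / 4) ^ k) * indicator {1 / 2 ^ (k + 1) <..} u)"
    by (rule le_suminf_ennreal)
  finally show ?thesis by (simp add: add_increasing2)
next
  case False
  then obtain k :: nat where k: "2 ^ k < u" "u \<le> 2 ^ (k + 1)"
    using dyadic_bracket_gt_one[of u] by auto
  have "exp (- u) - 1 + u \<le> 2 ^ (k + 1)"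
    using exp_minus_sub_one_add_le(2)[of u] assms k(2) by linarith
  with k(1) have "ennreal (exp (- u) - 1 + u) \<le> ennreal (2 ^ (k + 1)) * indicator {2 ^ k <..} u"
    by (simp add: ennreal_leI)
  also have "\<dots> \<le> (\<Sum>k. ennreal (2 ^ (k + 1)) * indicator {2 ^ k <..} u)"
    by (rule le_suminf_ennreal)
  finally show ?thesis by (simp add: add_increasing)
qed

lemma exp_sub_one_sub_le_dyadic:
  fixes s a \<alpha> :: real assumes "s \<le> a" "a \<le> 1" "0 \<le> \<alpha>" "\<alpha> \<le> 2"
  shows "ennreal (exp s - 1 - s)
    \<le> ennreal (a powr \<alpha>)
      + (\<Sum>k. ennreal ((1 / 4) ^ k) * indicator {1 / 2 ^ (k + 1) <..} (- s))
      + (\<Sum>k. ennreal (2 ^ (k + 1)) * indicator {2 ^ k <..} (- s))"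
proof (cases "0 \<le> s")
  case True
  have "exp s - 1 - s \<le> s\<^sup>2" using exp_bound[of s] True assms by simp
  also have "s\<^sup>2 = s powr 2" using True by (cases "s = 0") (simp_all add: powr_numeral)
  also have "\<dots> \<le> s powr \<alpha>" using True assms by (intro powr_mono') auto
  also have "\<dots> \<le> a powr \<alpha>" using True assms by (intro powr_mono2) auto
  finally show ?thesis by (simp add: ennreal_leI add_increasing2 add.assoc)
next
  case False
  then show ?thesis
    using exp_minus_sub_one_add_le_dyadic[of "- s"] by (simp add: add.assoc add_increasing)
qed

lemma suminf_ennreal_le_geometric:
  fixes f :: "nat \<Rightarrow> ennreal" and c q :: real
  assumes "\<And>k. f k \<le> ennreal (c * q ^ k)" "0 \<le> c" "0 \<le> q" "q < 1"
  shows "(\<Sum>k. f k) \<le> ennreal (c / (1 - q))"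
proof -
  have "(\<lambda>k. c * q ^ k) sums (c * (1 / (1 - q)))"
    using assms by (intro sums_mult geometric_sums) auto
  then have "(\<Sum>k. ennreal (c * q ^ k)) = ennreal (c / (1 - q))"
    using assms by (subst suminf_ennreal_eq) auto
  then show ?thesis using assms(1) by (metis suminf_le summableI)
qed

lemma nn_integral_suminf_indicator_greaterThan:
  fixes U :: "'a \<Rightarrow> real"
  assumes [measurable]: "U \<in> borel_measurable M"
  shows "(\<integral>\<^sup>+x. (\<Sum>k. w k * indicator {t k <..} (U x)) \<partial>M)
    = (\<Sum>k. w k * emeasure M {x \<in> space M. t k < U x})"
proof -
  have "(\<integral>\<^sup>+x. w k * indicator {t k <..} (U x) \<partial>M) = w k * emeasure M {x \<in> space M. t k < U x}" for k
    by (subst nn_integral_cmult_indicator[symmetric]) (auto intro!: nn_integral_cong simp: indicator_def)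
  then show ?thesis by (simp add: nn_integral_suminf)
qed

text \<open>
  In the two sums of the dyadic decomposition the weights \<open>4^-k\<close> beat the growth \<open>2^(k\<alpha>)\<close>
  of the tail bound at small thresholds because \<open>\<alpha> < 2\<close>, and the decay \<open>2^(-k\<alpha>)\<close> of the
  tail beats the weights \<open>2^k\<close> at large thresholds because \<open>1 < \<alpha>\<close>.
\<close>

lemma suminf_small_dyadic_tail_le:
  fixes U :: "'a \<Rightarrow> real" and A \<alpha> :: real
  assumes tail: "\<And>t. 0 < t \<Longrightarrow> emeasure M {x \<in> space M. t < U x} \<le> ennreal (A * t powr - \<alpha>)"
    and "0 \<le> A" "\<alpha> < 2"
  shows "(\<Sum>k. ennreal ((1 / 4) ^ k) * emeasure M {x \<in> space M. 1 / 2 ^ (k + 1) < U x})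
    \<le> ennreal (A * 2 powr \<alpha> / (1 - 2 powr \<alpha> / 4))"
proof (rule suminf_ennreal_le_geometric)
  fix k :: nat
  have "ennreal ((1 / 4) ^ k) * emeasure M {x \<in> space M. 1 / 2 ^ (k + 1) < U x}
      \<le> ennreal ((1 / 4) ^ k) * ennreal (A * (1 / 2 ^ (k + 1)) powr - \<alpha>)"
    by (intro mult_left_mono tail) auto
  also have "(1 / 2 ^ (k + 1) :: real) powr - \<alpha> = (2 powr \<alpha>) ^ (k + 1)"
    by (simp add: powr_minus_divide powr_divide power_powr del: power_Suc)
  also have "ennreal ((1 / 4) ^ k) * ennreal (A * (2 powr \<alpha>) ^ (k + 1))
      = ennreal (A * 2 powr \<alpha> * (2 powr \<alpha> / 4) ^ k)"
    using \<open>0 \<le> A\<close> by (simp add: ennreal_mult'[symmetric] power_divide field_simps)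
  finally show "ennreal ((1 / 4) ^ k) * emeasure M {x \<in> space M. 1 / 2 ^ (k + 1) < U x}
      \<le> ennreal (A * 2 powr \<alpha> * (2 powr \<alpha> / 4) ^ k)" .
  show "2 powr \<alpha> / 4 < (1::real)" using powr_less_mono[of \<alpha> 2 2] \<open>\<alpha> < 2\<close> by simp
qed (use \<open>0 \<le> A\<close> in auto)

lemma suminf_large_dyadic_tail_le:
  fixes U :: "'a \<Rightarrow> real" and A \<alpha> :: real
  assumes tail: "\<And>t. 0 < t \<Longrightarrow> emeasure M {x \<in> space M. t < U x} \<le> ennreal (A * t powr - \<alpha>)"
    and "0 \<le> A" "1 < \<alpha>"
  shows "(\<Sum>k. ennreal (2 ^ (k + 1)) * emeasure M {x \<in> space M. 2 ^ k < U x})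
    \<le> ennreal (2 * A / (1 - 2 powr (1 - \<alpha>)))"
proof (rule suminf_ennreal_le_geometric)
  fix k :: nat
  have "ennreal (2 ^ (k + 1)) * emeasure M {x \<in> space M. 2 ^ k < U x}
      \<le> ennreal (2 ^ (k + 1)) * ennreal (A * (2 ^ k) powr - \<alpha>)"
    by (intro mult_left_mono tail) auto
  also have "\<dots> = ennreal (2 * A * (2 powr (1 - \<alpha>)) ^ k)"
    using \<open>0 \<le> A\<close> by (simp add: ennreal_mult'[symmetric] powr_diff powr_minus power_powr field_simps)
  finally show "ennreal (2 ^ (k + 1)) * emeasure M {x \<in> space M. 2 ^ k < U x}
      \<le> ennreal (2 * A * (2 powr (1 - \<alpha>)) ^ k)" .
  show "2 powr (1 - \<alpha>) < (1::real)" using powr_less_mono[of "1 - \<alpha>" 0 2] \<open>1 < \<alpha>\<close> by simp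
qed (use \<open>0 \<le> A\<close> in auto)

lemma asymp_equiv_powr_imp_le_mult_powr:
  fixes F :: "real \<Rightarrow> real"
  assumes "F \<sim>[at_top] (\<lambda>r. r powr - \<alpha>)" "\<And>r. F r \<le> 1" "0 < \<alpha>"
  shows "\<exists>K>0. \<forall>r>0. F r \<le> K * r powr - \<alpha>"
proof -
  have "eventually (\<lambda>r. norm (F r) \<le> 2 * norm (r powr - \<alpha>)) at_top"
    using asymp_equiv_imp_eventually_le[OF assms(1)] by simp
  then obtain R0 where R0: "\<And>r. R0 \<le> r \<Longrightarrow> norm (F r) \<le> 2 * norm (r powr - \<alpha>)"
    by (auto simp: eventually_at_top_linorder)
  define R where "R = max R0 1"
  have R: "F r \<le> 2 * r powr - \<alpha>" if "R \<le> r" for r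
    using R0[of r] that by (simp add: R_def)
  have "1 \<le> R" by (simp add: R_def)
  then have "1 \<le> R powr \<alpha>" using assms(3) by (simp add: ge_one_powr_ge_zero)
  show ?thesis
  proof (intro exI[of _ "2 * R powr \<alpha>"] conjI allI impI)
    show "0 < 2 * R powr \<alpha>" using \<open>1 \<le> R\<close> by simp
    fix r :: real assume "0 < r"
    show "F r \<le> 2 * R powr \<alpha> * r powr - \<alpha>"
    proof (cases "R \<le> r")
      case True
      then have "F r \<le> 2 * 1 * r powr - \<alpha>" using R by simp
      also have "\<dots> \<le> 2 * R powr \<alpha> * r powr - \<alpha>"
        using \<open>1 \<le> R powr \<alpha>\<close> by (intro mult_right_mono) auto
      finally show ?thesis .
    next
      case False
      then have "R powr - \<alpha> \<le> r powr - \<alpha>" using \<open>0 < r\<close> assms(3) by (intro powr_mono2') auto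
      then have "1 \<le> R powr \<alpha> * r powr - \<alpha>" using \<open>1 \<le> R\<close> by (simp add: powr_minus field_simps)
      also have "\<dots> \<le> 2 * R powr \<alpha> * r powr - \<alpha>" by simp
      finally show ?thesis using assms(2)[of r] by linarith
    qed
  qed
qed

lemma first_passage_exists:
  fixes s :: "nat \<Rightarrow> real"
  assumes "1 \<le> n" "x \<le> Max (s ` {1..n})"
  shows "\<exists>k\<in>{1..n}. x \<le> s k \<and> (\<forall>m\<in>{1..<k}. s m < x)"
proof -
  have "Max (s ` {1..n}) \<in> s ` {1..n}" using assms by (intro Max_in) auto
  then obtain m where m: "m \<in> {1..n}" "Max (s ` {1..n}) = s m" by auto
  with assms have "x \<le> s m" by simp
  then obtain k where k: "1 \<le> k \<and> x \<le> s k" "\<And>j. j < k \<Longrightarrow> \<not> (1 \<le> j \<and> x \<le> s j)"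
    using exists_least_iff[of "\<lambda>k. 1 \<le> k \<and> x \<le> s k"] m(1) by auto
  with \<open>x \<le> s m\<close> m(1) have "k \<le> m" by (meson atLeastAtMost_iff not_le)
  with k m(1) show ?thesis by force
qed

lemma measure_vimage_eq_of_distr_eq:
  assumes "distr M borel X = distr M borel Y" "X \<in> borel_measurable M" "Y \<in> borel_measurable M"
    and "A \<in> sets borel"
  shows "measure M (X -` A \<inter> space M) = measure M (Y -` A \<inter> space M)"
  using assms measure_distr[of X M borel A] measure_distr[of Y M borel A] by simp

context prob_space
begin

lemma integrable_exp_mult_of_AE_le:
  fixes Y :: "'a \<Rightarrow> real"
  assumes "Y \<in> borel_measurable M" "AE x in M. Y x \<le> b" "0 \<le> l"
  shows "integrable M (\<lambda>x. exp (l * Y x))"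
  by (rule integrable_const_bound[where B = "exp (l * b)"])
     (use assms in \<open>auto elim!: eventually_mono intro: mult_left_mono\<close>)

lemma one_le_nn_integral_exp_mult:
  fixes Y :: "'a \<Rightarrow> real"
  assumes "integrable M Y" "expectation Y = 0" "integrable M (\<lambda>x. exp (l * Y x))"
  shows "1 \<le> (\<integral>\<^sup>+x. ennreal (exp (l * Y x)) \<partial>M)"
proof -
  have "1 = expectation (\<lambda>x. 1 + l * Y x)"
    using assms by (simp add: prob_space)
  also have "\<dots> \<le> expectation (\<lambda>x. exp (l * Y x))"
    using assms by (intro integral_mono) auto
  finally show ?thesis
    using assms(3) by (simp add: nn_integral_eq_integral ennreal_leI)
qed

lemma emeasure_scaled_lower_tail_le:
  fixes Y :: "'a \<Rightarrow> real"
  assumes tail: "\<And>r. 0 < r \<Longrightarrow> prob {x \<in> space M. Y x < - r} \<le> K * r powr - \<alpha>"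
    and "0 < l" "0 < t"
  shows "emeasure M {x \<in> space M. t < - (l * Y x)} \<le> ennreal (K * l powr \<alpha> * t powr - \<alpha>)"
proof -
  have "{x \<in> space M. t < - (l * Y x)} = {x \<in> space M. Y x < - (t / l)}"
    using assms by (auto simp: field_simps)
  moreover have "(t / l) powr - \<alpha> = l powr \<alpha> * t powr - \<alpha>"
    using assms by (simp add: powr_divide powr_minus field_simps)
  ultimately show ?thesis
    using tail[of "t / l"] assms by (simp add: emeasure_eq_measure ennreal_leI mult.assoc)
qed

lemma nn_integral_exp_mult_sub_le:
  fixes Y :: "'a \<Rightarrow> real"
  assumes [measurable]: "Y \<in> borel_measurable M" and bounded: "AE x in M. Y x \<le> b"
    and tail: "\<And>r. 0 < r \<Longrightarrow> prob {x \<in> space M. Y x < - r} \<le> K * r powr - \<alpha>"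
    and \<alpha>: "1 < \<alpha>" "\<alpha> < 2" and "0 \<le> K" "0 \<le> b" and l: "0 < l" "l * b \<le> 1"
  shows "(\<integral>\<^sup>+x. ennreal (exp (l * Y x) - 1 - l * Y x) \<partial>M)
    \<le> ennreal ((b powr \<alpha> + K * 2 powr \<alpha> / (1 - 2 powr \<alpha> / 4)
                 + 2 * K / (1 - 2 powr (1 - \<alpha>))) * l powr \<alpha>)"
proof -
  define U where "U x = - (l * Y x)" for x
  have U_tail: "emeasure M {x \<in> space M. t < U x} \<le> ennreal (K * l powr \<alpha> * t powr - \<alpha>)"
    if "0 < t" for t
    unfolding U_def using emeasure_scaled_lower_tail_le[OF tail l(1) that] .
  have "(\<integral>\<^sup>+x. ennreal (exp (l * Y x) - 1 - l * Y x) \<partial>M)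
      \<le> (\<integral>\<^sup>+x. ennreal ((l * b) powr \<alpha>)
            + (\<Sum>k. ennreal ((1 / 4) ^ k) * indicator {1 / 2 ^ (k + 1) <..} (U x))
            + (\<Sum>k. ennreal (2 ^ (k + 1)) * indicator {2 ^ k <..} (U x)) \<partial>M)"
    using bounded
    by (intro nn_integral_mono_AE, elim eventually_mono, unfold U_def,
        intro exp_sub_one_sub_le_dyadic) (use l \<alpha> in \<open>auto intro: mult_left_mono\<close>)
  also have "\<dots> = ennreal ((l * b) powr \<alpha>)
      + (\<Sum>k. ennreal ((1 / 4) ^ k) * emeasure M {x \<in> space M. 1 / 2 ^ (k + 1) < U x})
      + (\<Sum>k. ennreal (2 ^ (k + 1)) * emeasure M {x \<in> space M. 2 ^ k < U x})"
    by (simp add: nn_integral_add nn_integral_suminf_indicator_greaterThan U_def emeasure_space_1)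
  also have "\<dots> \<le> ennreal ((l * b) powr \<alpha>)
      + ennreal (K * l powr \<alpha> * 2 powr \<alpha> / (1 - 2 powr \<alpha> / 4))
      + ennreal (2 * (K * l powr \<alpha>) / (1 - 2 powr (1 - \<alpha>)))"
    using \<open>0 \<le> K\<close> \<alpha>
    by (intro add_mono order_refl suminf_small_dyadic_tail_le suminf_large_dyadic_tail_le U_tail)
       auto
  also have "\<dots> = ennreal ((b powr \<alpha> + K * 2 powr \<alpha> / (1 - 2 powr \<alpha> / 4)
                 + 2 * K / (1 - 2 powr (1 - \<alpha>))) * l powr \<alpha>)"
    using \<open>0 \<le> K\<close> \<open>0 \<le> b\<close> l two_powr_ratios_less_one[OF \<alpha>]
    by (simp add: ennreal_plus[symmetric] powr_mult algebra_simps del: ennreal_plus)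
  finally show ?thesis .
qed

lemma nn_integral_exp_mult_le:
  fixes Y :: "'a \<Rightarrow> real"
  assumes Y[measurable]: "Y \<in> borel_measurable M" "integrable M Y" "expectation Y = 0"
    and "AE x in M. Y x \<le> b"
    and "\<And>r. 0 < r \<Longrightarrow> prob {x \<in> space M. Y x < - r} \<le> K * r powr - \<alpha>"
    and \<alpha>: "1 < \<alpha>" "\<alpha> < 2" and "0 \<le> K" "0 \<le> b" and "0 < l" "l * b \<le> 1"
  shows "(\<integral>\<^sup>+x. exp (l * Y x) \<partial>M)
    \<le> ennreal (1 + (b powr \<alpha> + K * 2 powr \<alpha> / (1 - 2 powr \<alpha> / 4)
                     + 2 * K / (1 - 2 powr (1 - \<alpha>))) * l powr \<alpha>)"
proof -
  define \<phi> where "\<phi> x = exp (l * Y x) - 1 - l * Y x" for x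
  have \<phi>_nonneg: "0 \<le> \<phi> x" for x
    using exp_ge_add_one_self[of "l * Y x"] unfolding \<phi>_def by linarith
  have int_exp: "integrable M (\<lambda>x. exp (l * Y x))"
    using integrable_exp_mult_of_AE_le assms by simp
  then have int_\<phi>: "integrable M \<phi>" unfolding \<phi>_def using Y by auto
  have "ennreal (expectation \<phi>) = (\<integral>\<^sup>+x. ennreal (\<phi> x) \<partial>M)"
    using int_\<phi> \<phi>_nonneg by (simp add: nn_integral_eq_integral)
  also have "\<dots> \<le> ennreal ((b powr \<alpha> + K * 2 powr \<alpha> / (1 - 2 powr \<alpha> / 4)
                   + 2 * K / (1 - 2 powr (1 - \<alpha>))) * l powr \<alpha>)"
    unfolding \<phi>_def by (rule nn_integral_exp_mult_sub_le[OF assms(1,4-)])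
  finally have "expectation \<phi> \<le> (b powr \<alpha> + K * 2 powr \<alpha> / (1 - 2 powr \<alpha> / 4)
                                + 2 * K / (1 - 2 powr (1 - \<alpha>))) * l powr \<alpha>"
    using \<open>0 \<le> K\<close> two_powr_ratios_less_one[OF \<alpha>] by (subst (asm) ennreal_le_iff) auto
  moreover have "expectation (\<lambda>x. exp (l * Y x)) = 1 + expectation \<phi>"
    using int_exp Y unfolding \<phi>_def[abs_def] by (simp add: prob_space)
  ultimately show ?thesis
    using int_exp by (simp add: nn_integral_eq_integral ennreal_leI)
qed

lemma indep_var_nn_integral_mult:
  fixes X1 X2 :: "'a \<Rightarrow> real"
  assumes "indep_var borel X1 borel X2" "\<And>\<omega>. 0 \<le> X1 \<omega>" "\<And>\<omega>. 0 \<le> X2 \<omega>"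
  shows "(\<integral>\<^sup>+\<omega>. ennreal (X1 \<omega> * X2 \<omega>) \<partial>M) = (\<integral>\<^sup>+\<omega>. X1 \<omega> \<partial>M) * (\<integral>\<^sup>+\<omega>. X2 \<omega> \<partial>M)"
proof -
  have "case_bool borel borel = (\<lambda>_::bool. borel :: real measure)"
    by (simp add: fun_eq_iff split: bool.split)
  with assms(1) have "indep_vars (\<lambda>_. borel) (case_bool X1 X2) UNIV"
    by (simp add: indep_var_def)
  then have "indep_vars (\<lambda>_. borel) (\<lambda>i \<omega>. ennreal (case_bool X1 X2 i \<omega>)) UNIV"
    by (rule indep_vars_compose2) measurable
  from indep_vars_nn_integral[OF _ this] show ?thesis
    by (simp add: UNIV_bool ennreal_mult assms(2,3) mult.commute)
qed

lemma indep_vars_nn_integral_prod_exp: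
  fixes X :: "'i \<Rightarrow> 'a \<Rightarrow> real"
  assumes "indep_vars (\<lambda>_. borel) X I" "finite J" "J \<subseteq> I"
  shows "(\<integral>\<^sup>+\<omega>. ennreal (\<Prod>j\<in>J. exp (l * X j \<omega>)) \<partial>M)
    = (\<Prod>j\<in>J. \<integral>\<^sup>+\<omega>. ennreal (exp (l * X j \<omega>)) \<partial>M)"
proof -
  have "indep_vars (\<lambda>_. borel) (\<lambda>j \<omega>. ennreal (exp (l * X j \<omega>))) J"
    by (rule indep_vars_compose2[OF indep_vars_subset[OF assms(1,3)]]) measurable
  then have "(\<integral>\<^sup>+\<omega>. (\<Prod>j\<in>J. ennreal (exp (l * X j \<omega>))) \<partial>M)
      = (\<Prod>j\<in>J. \<integral>\<^sup>+\<omega>. ennreal (exp (l * X j \<omega>)) \<partial>M)"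
    by (rule indep_vars_nn_integral[OF assms(2)]) auto
  then show ?thesis by (simp add: prod_ennreal)
qed

lemma nn_integral_le_mult_indep_exp:
  fixes X :: "'i \<Rightarrow> 'a \<Rightarrow> real"
  assumes ind: "indep_vars (\<lambda>_. borel) X I" and "J \<inter> K = {}" "J \<subseteq> I" "K \<subseteq> I" "finite K"
    and g: "g \<in> borel_measurable (PiM J (\<lambda>_. borel))" "\<And>v. 0 \<le> g v"
    and one_le: "\<And>i. i \<in> K \<Longrightarrow> 1 \<le> (\<integral>\<^sup>+\<omega>. ennreal (exp (l * X i \<omega>)) \<partial>M)"
  shows "(\<integral>\<^sup>+\<omega>. g (restrict (\<lambda>i. X i \<omega>) J) \<partial>M)
    \<le> (\<integral>\<^sup>+\<omega>. ennreal (g (restrict (\<lambda>i. X i \<omega>) J) * (\<Prod>i\<in>K. exp (l * X i \<omega>))) \<partial>M)"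
proof -
  define h where "h v = (\<Prod>i\<in>K. exp (l * v i))" for v :: "'i \<Rightarrow> real"
  have "h \<in> borel_measurable (PiM K (\<lambda>_. borel))" unfolding h_def by measurable
  with assms have "indep_var borel (g \<circ> (\<lambda>\<omega>. restrict (\<lambda>i. X i \<omega>) J))
      borel (h \<circ> (\<lambda>\<omega>. restrict (\<lambda>i. X i \<omega>) K))"
    by (intro indep_var_compose[OF indep_var_restrict[OF ind]]) auto
  moreover have "h \<circ> (\<lambda>\<omega>. restrict (\<lambda>i. X i \<omega>) K) = (\<lambda>\<omega>. \<Prod>i\<in>K. exp (l * X i \<omega>))"
    unfolding h_def comp_def by (intro ext prod.cong) auto
  ultimately have "(\<integral>\<^sup>+\<omega>. ennreal (g (restrict (\<lambda>i. X i \<omega>) J) * (\<Prod>i\<in>K. exp (l * X i \<omega>))) \<partial>M)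
      = (\<integral>\<^sup>+\<omega>. g (restrict (\<lambda>i. X i \<omega>) J) \<partial>M) * (\<integral>\<^sup>+\<omega>. ennreal (\<Prod>i\<in>K. exp (l * X i \<omega>)) \<partial>M)"
    using g(2) by (subst indep_var_nn_integral_mult) (auto simp: comp_def prod_nonneg)
  also have "(\<integral>\<^sup>+\<omega>. ennreal (\<Prod>i\<in>K. exp (l * X i \<omega>)) \<partial>M)
      = (\<Prod>i\<in>K. \<integral>\<^sup>+\<omega>. ennreal (exp (l * X i \<omega>)) \<partial>M)"
    using assms by (intro indep_vars_nn_integral_prod_exp) auto
  finally have eq: "(\<integral>\<^sup>+\<omega>. ennreal (g (restrict (\<lambda>i. X i \<omega>) J) * (\<Prod>i\<in>K. exp (l * X i \<omega>))) \<partial>M)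
      = (\<integral>\<^sup>+\<omega>. g (restrict (\<lambda>i. X i \<omega>) J) \<partial>M) * (\<Prod>i\<in>K. \<integral>\<^sup>+\<omega>. ennreal (exp (l * X i \<omega>)) \<partial>M)" .
  have "1 \<le> (\<Prod>i\<in>K. \<integral>\<^sup>+\<omega>. ennreal (exp (l * X i \<omega>)) \<partial>M)"
    using one_le prod_mono_ennreal[of K "\<lambda>_. 1"] by auto
  then show ?thesis
    unfolding eq using mult_left_mono[of 1] by fastforce
qed

lemma exp_mult_emeasure_first_passage_le:
  fixes X :: "nat \<Rightarrow> 'a \<Rightarrow> real" and x :: real
  assumes ind: "indep_vars (\<lambda>_. borel) X {1..}" and k: "k \<in> {1..n}" and "0 \<le> l"
    and one_le: "\<And>j. j \<in> {k+1..n} \<Longrightarrow> 1 \<le> (\<integral>\<^sup>+\<omega>. ennreal (exp (l * X j \<omega>)) \<partial>M)"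
  defines "A \<equiv> {\<omega> \<in> space M. x \<le> (\<Sum>j\<in>{1..k}. X j \<omega>) \<and> (\<forall>m\<in>{1..<k}. (\<Sum>j\<in>{1..m}. X j \<omega>) < x)}"
  shows "ennreal (exp (l * x)) * emeasure M A
    \<le> (\<integral>\<^sup>+\<omega>. indicator A \<omega> * ennreal (exp (l * (\<Sum>j\<in>{1..n}. X j \<omega>))) \<partial>M)"
proof -
  define S where "S m \<omega> = (\<Sum>j\<in>{1..m}. X j \<omega>)" for m \<omega>
  have A_S: "A = {\<omega> \<in> space M. x \<le> S k \<omega> \<and> (\<forall>m\<in>{1..<k}. S m \<omega> < x)}"
    by (simp add: A_def S_def)
  have "X j \<in> borel_measurable M" if "1 \<le> j" for j
    using ind that by (auto simp: indep_vars_def)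
  then have [measurable]: "S m \<in> borel_measurable M" for m
    unfolding S_def by (intro borel_measurable_sum) auto
  have [measurable]: "A \<in> sets M" unfolding A_S by measurable
  define g where "g v = (if x \<le> (\<Sum>i\<in>{1..k}. v i) \<and> (\<forall>m\<in>{1..<k}. (\<Sum>i\<in>{1..m}. v i) < x)
    then exp (l * (\<Sum>i\<in>{1..k}. v i)) else 0)" for v :: "nat \<Rightarrow> real"
  have g_restrict: "g (restrict (\<lambda>i. X i \<omega>) {1..k}) = indicator A \<omega> * exp (l * S k \<omega>)"
    if "\<omega> \<in> space M" for \<omega>
  proof -
    have "(\<Sum>i\<in>{1..m}. restrict (\<lambda>i. X i \<omega>) {1..k} i) = S m \<omega>" if "m \<le> k" for m
      unfolding S_def using that by (intro sum.cong) auto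
    with \<open>\<omega> \<in> space M\<close> show ?thesis by (auto simp: g_def A_S)
  qed
  have S_split: "S n \<omega> = S k \<omega> + (\<Sum>i\<in>{k+1..n}. X i \<omega>)" for \<omega>
  proof -
    have "{1..n} = {1..k} \<union> {k+1..n}" using k by auto
    then show ?thesis unfolding S_def by (simp add: sum.union_disjoint)
  qed
  have "ennreal (exp (l * x)) * emeasure M A = (\<integral>\<^sup>+\<omega>. ennreal (exp (l * x)) * indicator A \<omega> \<partial>M)"
    by (simp add: nn_integral_cmult_indicator)
  also have "\<dots> \<le> (\<integral>\<^sup>+\<omega>. g (restrict (\<lambda>i. X i \<omega>) {1..k}) \<partial>M)"
  proof (intro nn_integral_mono)
    fix \<omega> assume \<omega>: "\<omega> \<in> space M"
    show "ennreal (exp (l * x)) * indicator A \<omega> \<le> ennreal (g (restrict (\<lambda>i. X i \<omega>) {1..k}))"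
      unfolding g_restrict[OF \<omega>] using \<open>0 \<le> l\<close>
      by (auto simp: A_S indicator_def intro!: ennreal_leI mult_left_mono)
  qed
  also have "\<dots> \<le> (\<integral>\<^sup>+\<omega>. ennreal (g (restrict (\<lambda>i. X i \<omega>) {1..k}) * (\<Prod>i\<in>{k+1..n}. exp (l * X i \<omega>))) \<partial>M)"
    using k one_le by (intro nn_integral_le_mult_indep_exp[OF ind]) (auto simp: g_def)
  also have "\<dots> = (\<integral>\<^sup>+\<omega>. indicator A \<omega> * ennreal (exp (l * S n \<omega>)) \<partial>M)"
  proof (intro nn_integral_cong)
    fix \<omega> assume \<omega>: "\<omega> \<in> space M"
    show "ennreal (g (restrict (\<lambda>i. X i \<omega>) {1..k}) * (\<Prod>i\<in>{k+1..n}. exp (l * X i \<omega>)))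
        = indicator A \<omega> * ennreal (exp (l * S n \<omega>))"
      unfolding g_restrict[OF \<omega>] S_split
      by (simp add: distrib_left exp_add exp_sum sum_distrib_left indicator_def)
  qed
  finally show ?thesis by (simp add: S_def)
qed

lemma exp_mult_emeasure_max_partial_sum_le:
  fixes X :: "nat \<Rightarrow> 'a \<Rightarrow> real"
  assumes ind: "indep_vars (\<lambda>_. borel) X {1..}" and "1 \<le> n" "0 \<le> l"
    and one_le: "\<And>j. j \<in> {1..n} \<Longrightarrow> 1 \<le> (\<integral>\<^sup>+\<omega>. ennreal (exp (l * X j \<omega>)) \<partial>M)"
  shows "ennreal (exp (l * x)) * emeasure M {\<omega> \<in> space M. x \<le> Max ((\<lambda>m. \<Sum>j\<in>{1..m}. X j \<omega>) ` {1..n})}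
    \<le> (\<Prod>j\<in>{1..n}. \<integral>\<^sup>+\<omega>. ennreal (exp (l * X j \<omega>)) \<partial>M)"
proof -
  define S where "S m \<omega> = (\<Sum>j\<in>{1..m}. X j \<omega>)" for m \<omega>
  define A where "A k = {\<omega> \<in> space M. x \<le> S k \<omega> \<and> (\<forall>m\<in>{1..<k}. S m \<omega> < x)}" for k
  have "X j \<in> borel_measurable M" if "1 \<le> j" for j
    using ind that by (auto simp: indep_vars_def)
  then have [measurable]: "S m \<in> borel_measurable M" for m
    unfolding S_def by (intro borel_measurable_sum) auto
  have [measurable]: "A k \<in> sets M" for k unfolding A_def by measurable
  have disj: "disjoint_family_on A {1..n}"
    unfolding disjoint_family_on_def
  proof (intro ballI impI)
    fix a c assume "a \<in> {1..n}" "c \<in> {1..n}" "a \<noteq> c"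
    then show "A a \<inter> A c = {}"
      by (cases a c rule: linorder_cases) (force simp: A_def)+
  qed
  have cover: "{\<omega> \<in> space M. x \<le> Max ((\<lambda>m. S m \<omega>) ` {1..n})} = (\<Union>k\<in>{1..n}. A k)"
    using first_passage_exists[OF \<open>1 \<le> n\<close>] by (auto simp: A_def intro: Max_ge order.trans)
  have "ennreal (exp (l * x)) * emeasure M {\<omega> \<in> space M. x \<le> Max ((\<lambda>m. S m \<omega>) ` {1..n})}
      = (\<Sum>k\<in>{1..n}. ennreal (exp (l * x)) * emeasure M (A k))"
    unfolding cover sum_distrib_left[symmetric] using disj by (subst sum_emeasure) auto
  also have "\<dots> \<le> (\<Sum>k\<in>{1..n}. \<integral>\<^sup>+\<omega>. indicator (A k) \<omega> * ennreal (exp (l * S n \<omega>)) \<partial>M)"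
    using assms unfolding A_def S_def by (intro sum_mono exp_mult_emeasure_first_passage_le) auto
  also have "\<dots> = (\<integral>\<^sup>+\<omega>. indicator (\<Union>k\<in>{1..n}. A k) \<omega> * ennreal (exp (l * S n \<omega>)) \<partial>M)"
    using disj by (simp add: nn_integral_sum[symmetric] sum_distrib_right indicator_UN_disjoint)
  also have "\<dots> \<le> (\<integral>\<^sup>+\<omega>. ennreal (\<Prod>j\<in>{1..n}. exp (l * X j \<omega>)) \<partial>M)"
    by (intro nn_integral_mono) (simp add: S_def sum_distrib_left exp_sum indicator_def)
  also have "\<dots> = (\<Prod>j\<in>{1..n}. \<integral>\<^sup>+\<omega>. ennreal (exp (l * X j \<omega>)) \<partial>M)"
    by (rule indep_vars_nn_integral_prod_exp[OF ind]) auto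
  finally show ?thesis by (simp add: S_def)
qed

lemma prob_max_partial_sum_ge_le:
  fixes X :: "nat \<Rightarrow> 'a \<Rightarrow> real"
  assumes ind: "indep_vars (\<lambda>_. borel) X {1..}" and "0 < \<alpha>" "0 \<le> D" "0 < c" "1 \<le> n"
    and mgf: "\<And>j l. 1 \<le> j \<Longrightarrow> 0 < l \<Longrightarrow> l \<le> c \<Longrightarrow>
      1 \<le> (\<integral>\<^sup>+\<omega>. ennreal (exp (l * X j \<omega>)) \<partial>M)
      \<and> (\<integral>\<^sup>+\<omega>. ennreal (exp (l * X j \<omega>)) \<partial>M) \<le> ennreal (1 + D * l powr \<alpha>)"
  shows "prob {\<omega> \<in> space M. C * real n powr (1 / \<alpha>) \<le> Max ((\<lambda>m. \<Sum>j\<in>{1..m}. X j \<omega>) ` {1..n})}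
    \<le> exp (D * c powr \<alpha>) * exp (- c * C)"
proof -
  define N where "N = real n powr (1 / \<alpha>)"
  define l where "l = c / N"
  have "1 \<le> N" unfolding N_def using assms by (intro ge_one_powr_ge_zero) auto
  then have l: "0 < l" "l \<le> c" using \<open>0 < c\<close> by (auto simp: l_def field_simps)
  have "N powr \<alpha> = real n" unfolding N_def using \<open>0 < \<alpha>\<close> by (simp add: powr_powr)
  then have n_l: "real n * l powr \<alpha> = c powr \<alpha>"
    unfolding l_def using \<open>1 \<le> N\<close> \<open>0 < c\<close> \<open>1 \<le> n\<close> by (simp add: powr_divide)
  have "(1 + D * l powr \<alpha>) ^ n \<le> exp (D * l powr \<alpha>) ^ n"
    using \<open>0 \<le> D\<close> by (intro power_mono) auto
  also have "\<dots> = exp (D * c powr \<alpha>)"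
    by (simp add: exp_of_nat_mult[symmetric] flip: n_l)
  finally have power_le: "(1 + D * l powr \<alpha>) ^ n \<le> exp (D * c powr \<alpha>)" .
  let ?E = "{\<omega> \<in> space M. C * N \<le> Max ((\<lambda>m. \<Sum>j\<in>{1..m}. X j \<omega>) ` {1..n})}"
  have "c * C = l * (C * N)" using \<open>1 \<le> N\<close> by (simp add: l_def)
  then have "ennreal (exp (c * C)) * emeasure M ?E
      \<le> (\<Prod>j\<in>{1..n}. \<integral>\<^sup>+\<omega>. ennreal (exp (l * X j \<omega>)) \<partial>M)"
    using mgf l by (simp only:) (intro exp_mult_emeasure_max_partial_sum_le[OF ind \<open>1 \<le> n\<close>]; simp)
  also have "\<dots> \<le> (\<Prod>j\<in>{1..n}. ennreal (1 + D * l powr \<alpha>))"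
    using mgf l by (intro prod_mono_ennreal) auto
  also have "\<dots> = ennreal ((1 + D * l powr \<alpha>) ^ n)"
    using \<open>0 \<le> D\<close> by (simp add: ennreal_power del: ennreal_plus)
  also have "\<dots> \<le> ennreal (exp (D * c powr \<alpha>))"
    using power_le by (rule ennreal_leI)
  finally have "exp (c * C) * prob ?E \<le> exp (D * c powr \<alpha>)"
    by (simp add: emeasure_eq_measure ennreal_mult'[symmetric])
  then show ?thesis
    by (simp add: N_def exp_minus field_simps)
qed

end

theorem lemma5p8:
  fixes M :: "'s measure" and X :: "nat \<Rightarrow> 's \<Rightarrow> real"
    and \<alpha> b :: real
  assumes "prob_space M"
    and "1 < \<alpha>" and "\<alpha> < 2" and "b > 0"
    and "\<And>j. j \<ge> 1 \<Longrightarrow> X j \<in> borel_measurable M"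
    and "prob_space.indep_vars M (\<lambda>_. borel) X {1..}"
    and "\<And>i j. i \<ge> 1 \<Longrightarrow> j \<ge> 1 \<Longrightarrow> distr M borel (X i) = distr M borel (X j)"
    and "\<And>j. j \<ge> 1 \<Longrightarrow> integrable M (X j)"
    and "\<And>j. j \<ge> 1 \<Longrightarrow> prob_space.expectation M (X j) = 0"
    and "\<And>j. j \<ge> 1 \<Longrightarrow> (AE x in M. X j x \<le> b)"
    and "\<And>j. j \<ge> 1 \<Longrightarrow>
           (\<lambda>r. measure M {x \<in> space M. X j x < - r}) \<sim>[at_top] (\<lambda>r. r powr (- \<alpha>))"
  shows "\<exists>a0 a1. a0 > 0 \<and> a1 > 0 \<and>
    (\<forall>C > 0. \<forall>n::nat \<ge> 1.
       measure M {x \<in> space M. Max ((\<lambda>m. \<Sum>j\<in>{1..m}. X j x) ` {1..n}) \<ge> C * real n powr (1 / \<alpha>)}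
         \<le> a0 * exp (- a1 * C))"
proof -
  interpret prob_space M by fact
  obtain K where "0 < K" and tail1: "\<And>r. 0 < r \<Longrightarrow> prob {x \<in> space M. X 1 x < - r} \<le> K * r powr - \<alpha>"
    using asymp_equiv_powr_imp_le_mult_powr[OF assms(11)[of 1] prob_le_1] assms(2) by auto
  have tail: "prob {x \<in> space M. X j x < - r} \<le> K * r powr - \<alpha>" if "1 \<le> j" "0 < r" for j r
    using measure_vimage_eq_of_distr_eq[OF assms(7)[OF that(1), of 1] assms(5)[OF that(1)], of "{..< - r}"]
      assms(5)[of 1] tail1[OF that(2)] by (simp add: vimage_def Int_def conj_commute)
  define D where "D = b powr \<alpha> + K * 2 powr \<alpha> / (1 - 2 powr \<alpha> / 4) + 2 * K / (1 - 2 powr (1 - \<alpha>))"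
  have "0 \<le> D" unfolding D_def using \<open>0 < K\<close> two_powr_ratios_less_one[OF assms(2,3)] by simp
  have mgf: "1 \<le> (\<integral>\<^sup>+\<omega>. ennreal (exp (l * X j \<omega>)) \<partial>M)
      \<and> (\<integral>\<^sup>+\<omega>. ennreal (exp (l * X j \<omega>)) \<partial>M) \<le> ennreal (1 + D * l powr \<alpha>)"
    if "1 \<le> j" "0 < l" "l \<le> 1 / b" for j l
    using assms(2-4) assms(5,8-10)[OF that(1)] tail[OF that(1)] \<open>0 < K\<close> that(2,3) unfolding D_def
    by (intro conjI one_le_nn_integral_exp_mult integrable_exp_mult_of_AE_le nn_integral_exp_mult_le)
       (auto simp: field_simps)
  show ?thesis
    using prob_max_partial_sum_ge_le[where c = "1 / b", OF assms(6) _ \<open>0 \<le> D\<close> _ _ mgf] assms(2,4)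
    by (intro exI[of _ "exp (D * (1 / b) powr \<alpha>)"] exI[of _ "1 / b"] conjI allI impI) auto
qed

end
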